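(* Let $X=\ell_p$ for some $1\le p<\infty$, or $X=c_0$, considered as a Banach algebra under coordinatewise multiplication. Let $\mathcal A$ be a finitely invariant Furstenberg family, $x_0\in X$ and $m\in\mathbb N$, and let $\lambda\in\mathbb C$ with $|\lambda|>1$. If $x_0^m$ is $\mathcal A$-hypercyclic for $\lambda B$, then so is $\sum_{\nu=m}^N\alpha_\nu x_0^\nu$ for any $N\ge m$ and any $\alpha_m,\ldots,\alpha_N\in\mathbb C$ with $\alpha_m\neq0$.
   Context: $\lambda B(x(1),x(2),x(3),\ldots)=(\lambda x(2),\lambda x(3),\ldots)$; powers are coordinatewise. A Furstenberg family is a non-empty family $\mathcal A$ of subsets of $\mathbb N_0$ with $\varnothing\notin\mathcal A$ and such that $A\in\mathcal A$, $A\subset B\subset\mathbb N_0$ imply $B\in\mathcal A$; it is finitely invariant if $A\in\mathcal A$ implies $A\setminus[0,N]\in\mathcal A$ for all $N\ge0$. A vector $x$ is $\mathcal A$-hypercyclic for an operator $T$ if for every non-empty open $U\subset X$, $\{n\ge0:T^nx\in U\}\in\mathcal A$. *)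

theory Defs
  imports "HOL-Analysis.Analysis"
begin

text \<open>The sequence spaces \<open>\<ell>_p\<close> (\<open>1 \<le> p < \<infinity>\<close>) and \<open>c_0\<close> of complex sequences
  \<open>x = (x(1), x(2), \<dots>)\<close>, represented as functions \<open>nat \<Rightarrow> complex\<close> (index 0 = x(1)).\<close>

datatype seqspace = Lp real | C0

fun in_space :: "seqspace \<Rightarrow> (nat \<Rightarrow> complex) \<Rightarrow> bool" where
  "in_space (Lp p) x = summable (\<lambda>n. cmod (x n) powr p)"
| "in_space C0 x = (x \<longlonglongrightarrow> 0)"

definition carrier_space :: "seqspace \<Rightarrow> (nat \<Rightarrow> complex) set" where
  "carrier_space S = {x. in_space S x}"

fun valid_space :: "seqspace \<Rightarrow> bool" where
  "valid_space (Lp p) = (1 \<le> p)"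
| "valid_space C0 = True"

fun seqnorm :: "seqspace \<Rightarrow> (nat \<Rightarrow> complex) \<Rightarrow> real" where
  "seqnorm (Lp p) x = (\<Sum>n. cmod (x n) powr p) powr (1 / p)"
| "seqnorm C0 x = (SUP n. cmod (x n))"

definition open_in_space :: "seqspace \<Rightarrow> (nat \<Rightarrow> complex) set \<Rightarrow> bool" where
  "open_in_space S U \<longleftrightarrow> U \<subseteq> carrier_space S \<and>
     (\<forall>u\<in>U. \<exists>e>0. \<forall>y\<in>carrier_space S. seqnorm S (y - u) < e \<longrightarrow> y \<in> U)"

definition wshift :: "complex \<Rightarrow> (nat \<Rightarrow> complex) \<Rightarrow> (nat \<Rightarrow> complex)" where
  "wshift c x = (\<lambda>n. c * x (Suc n))"

definition furstenberg_family :: "nat set set \<Rightarrow> bool" where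
  "furstenberg_family \<A> \<longleftrightarrow> \<A> \<noteq> {} \<and> {} \<notin> \<A> \<and>
     (\<forall>A B. A \<in> \<A> \<and> A \<subseteq> B \<longrightarrow> B \<in> \<A>)"

definition finitely_invariant :: "nat set set \<Rightarrow> bool" where
  "finitely_invariant \<A> \<longleftrightarrow> (\<forall>A\<in>\<A>. \<forall>N. A - {0..N} \<in> \<A>)"

definition A_hypercyclic ::
  "seqspace \<Rightarrow> nat set set \<Rightarrow> ((nat \<Rightarrow> complex) \<Rightarrow> (nat \<Rightarrow> complex)) \<Rightarrow> (nat \<Rightarrow> complex) \<Rightarrow> bool" where
  "A_hypercyclic S \<A> T x \<longleftrightarrow> x \<in> carrier_space S \<and>
     (\<forall>U. open_in_space S U \<and> U \<noteq> {} \<longrightarrow> {n. (T ^^ n) x \<in> U} \<in> \<A>)"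

end

(*
  Write z = x0^m * g with g = alpha_m + sum_{nu>m} alpha_nu x0^(nu-m). Since x0 lies in X, x0 -> 0,
  so g converges to alpha_m /= 0. The iterates factor as (lambda B)^n z = (lambda B)^n y * g(. + n)
  with y = x0^m, and multiplication by a sequence uniformly close to alpha_m is a small perturbation
  of multiplication by alpha_m. Hence whenever (lambda B)^n y lies in a small ball around u/alpha_m
  and n is large, (lambda B)^n z lies in a prescribed ball around u. The return set of z thus
  contains a return set of y minus an initial segment, which is in the family by finite invariance.
*)
theory Submission
  imports Defs
begin

lemma powr_convex_combination_le:
  fixes s t w p :: real
  assumes "0 \<le> s" "0 \<le> t" "0 \<le> w" "w \<le> 1" "1 \<le> p"
  shows "(w * s + (1 - w) * t) powr p \<le> w * s powr p + (1 - w) * t powr p"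
proof -
  have powr_le_self: "x powr p \<le> x" if "0 \<le> x" "x \<le> 1" for x :: real
    using that assms(5) powr_le_one_le[of x p] by (cases "x = 0") auto
  consider "s = 0" | "t = 0" | "0 < s" "0 < t"
    using assms(1,2) by linarith
  then show ?thesis
  proof cases
    case 1
    have "((1 - w) * t) powr p = (1 - w) powr p * t powr p"
      using assms by (simp add: powr_mult)
    also have "\<dots> \<le> (1 - w) * t powr p"
      using powr_le_self[of "1 - w"] assms by (simp add: mult_right_mono)
    finally show ?thesis using 1 by simp
  next
    case 2
    have "(w * s) powr p = w powr p * s powr p"
      using assms by (simp add: powr_mult)
    also have "\<dots> \<le> w * s powr p"
      using powr_le_self[of w] assms by (simp add: mult_right_mono)
    finally show ?thesis using 2 by simp
  next
    case 3
    then show ?thesis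
      using convex_onD[OF powr_convex[OF assms(5)], of "1 - w" s t] assms
      by (simp add: algebra_simps)
  qed
qed

lemma lp_dominated:
  fixes y v :: "nat \<Rightarrow> complex"
  assumes p: "0 < p" and v: "in_space (Lp p) v" and C: "0 \<le> C"
    and le: "\<And>k. cmod (y k) \<le> C * cmod (v k)"
  shows "in_space (Lp p) y" and "seqnorm (Lp p) y \<le> C * seqnorm (Lp p) v"
proof -
  have v': "summable (\<lambda>n. cmod (v n) powr p)" using v by simp
  have pt: "cmod (y n) powr p \<le> C powr p * cmod (v n) powr p" for n
  proof -
    have "cmod (y n) powr p \<le> (C * cmod (v n)) powr p"
      using le[of n] p by (intro powr_mono2) auto
    also have "\<dots> = C powr p * cmod (v n) powr p" using C by (simp add: powr_mult)
    finally show ?thesis .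
  qed
  have sC: "summable (\<lambda>n. C powr p * cmod (v n) powr p)" using v' by (rule summable_mult)
  have y': "summable (\<lambda>n. cmod (y n) powr p)"
    using pt by (intro summable_comparison_test[OF _ sC]) auto
  then show "in_space (Lp p) y" by simp
  have "(\<Sum>n. cmod (y n) powr p) \<le> C powr p * (\<Sum>n. cmod (v n) powr p)"
    using suminf_le[OF pt y' sC] suminf_mult[OF v'] by simp
  then have "seqnorm (Lp p) y \<le> (C powr p * (\<Sum>n. cmod (v n) powr p)) powr (1 / p)"
    using p by (auto intro!: powr_mono2 suminf_nonneg y')
  also have "\<dots> = C * seqnorm (Lp p) v"
    using C p suminf_nonneg[OF v'] by (simp add: powr_mult powr_powr)
  finally show "seqnorm (Lp p) y \<le> C * seqnorm (Lp p) v" .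
qed

lemma lp_norm_eq_zero_iff:
  assumes "in_space (Lp p) a"
  shows "seqnorm (Lp p) a = 0 \<longleftrightarrow> a = (\<lambda>_. 0)"
proof -
  have "seqnorm (Lp p) a = 0 \<longleftrightarrow> (\<Sum>n. cmod (a n) powr p) = 0" by simp
  also have "\<dots> \<longleftrightarrow> (\<forall>n. cmod (a n) powr p = 0)"
    using assms by (intro suminf_eq_zero_iff) auto
  also have "\<dots> \<longleftrightarrow> a = (\<lambda>_. 0)" by (auto simp: fun_eq_iff)
  finally show ?thesis .
qed

lemma norm_add_powr_le:
  fixes x y :: "'a::real_normed_vector"
  assumes AB: "0 < A" "0 < B" and p: "1 \<le> p"
  shows "norm (x + y) powr p
    \<le> (A + B) powr p * (A / (A + B) * (norm x / A) powr p + B / (A + B) * (norm y / B) powr p)"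
proof -
  define w where "w = A / (A + B)"
  have w: "0 \<le> w" "w \<le> 1" "1 - w = B / (A + B)"
    using AB by (auto simp: w_def field_simps)
  have "w * (norm x / A) = norm x / (A + B)" and "(1 - w) * (norm y / B) = norm y / (A + B)"
    using AB w(3) by (simp_all add: w_def)
  then have "(A + B) * (w * (norm x / A) + (1 - w) * (norm y / B)) = norm x + norm y"
    using add_pos_pos[OF AB] by (simp add: add_divide_distrib[symmetric])
  then have "norm (x + y) \<le> (A + B) * (w * (norm x / A) + (1 - w) * (norm y / B))"
    using norm_triangle_ineq[of x y] by simp
  then have "norm (x + y) powr p \<le> ((A + B) * (w * (norm x / A) + (1 - w) * (norm y / B))) powr p"
    using p by (intro powr_mono2) auto
  also have "\<dots> = (A + B) powr p * (w * (norm x / A) + (1 - w) * (norm y / B)) powr p"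
    using AB w by (simp add: powr_mult)
  also have "\<dots> \<le> (A + B) powr p * (w * (norm x / A) powr p + (1 - w) * (norm y / B) powr p)"
    using AB w p by (intro mult_left_mono powr_convex_combination_le) auto
  finally show ?thesis
    by (simp add: w(3)) (simp add: w_def)
qed

lemma lp_triangle:
  fixes a b :: "nat \<Rightarrow> complex"
  assumes p: "1 \<le> p" and a: "in_space (Lp p) a" and b: "in_space (Lp p) b"
  shows "in_space (Lp p) (\<lambda>n. a n + b n)"
    and "seqnorm (Lp p) (\<lambda>n. a n + b n) \<le> seqnorm (Lp p) a + seqnorm (Lp p) b"
proof -
  define A B where "A = seqnorm (Lp p) a" and "B = seqnorm (Lp p) b"
  have "in_space (Lp p) (\<lambda>n. a n + b n) \<and> seqnorm (Lp p) (\<lambda>n. a n + b n) \<le> A + B"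
  proof (cases "A = 0 \<or> B = 0")
    case True
    then have "a = (\<lambda>_. 0) \<or> b = (\<lambda>_. 0)"
      using lp_norm_eq_zero_iff a b by (auto simp: A_def B_def)
    then show ?thesis using a b by (auto simp: A_def B_def)
  next
    case False
    have a': "summable (\<lambda>n. cmod (a n) powr p)" and b': "summable (\<lambda>n. cmod (b n) powr p)"
      using a b by auto
    have AB: "0 < A" "0 < B"
      using False by (auto simp: A_def B_def)
    have Ap: "A powr p = (\<Sum>n. cmod (a n) powr p)" and Bp: "B powr p = (\<Sum>n. cmod (b n) powr p)"
      using p suminf_nonneg[OF a'] suminf_nonneg[OF b'] by (auto simp: A_def B_def powr_powr)
    define g where "g n = (A + B) powr p *
      (A / (A + B) * (cmod (a n) / A) powr p + B / (A + B) * (cmod (b n) / B) powr p)" for n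
    have pt: "cmod (a n + b n) powr p \<le> g n" for n
      unfolding g_def using AB p by (rule norm_add_powr_le)
    have "g sums ((A + B) powr p * (A / (A + B) * ((\<Sum>n. cmod (a n) powr p) / A powr p)
        + B / (A + B) * ((\<Sum>n. cmod (b n) powr p) / B powr p)))"
      unfolding g_def powr_divide
      by (intro sums_mult sums_add sums_divide summable_sums a' b')
    then have g: "g sums ((A + B) powr p)"
      using AB by (simp add: Ap[symmetric] Bp[symmetric] add_divide_distrib[symmetric])
    have s: "summable (\<lambda>n. cmod (a n + b n) powr p)"
      using pt by (intro summable_comparison_test[OF _ sums_summable[OF g]]) auto
    have "(\<Sum>n. cmod (a n + b n) powr p) \<le> (A + B) powr p"
      using suminf_le[OF pt s sums_summable[OF g]] sums_unique[OF g] by simp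
    then have "seqnorm (Lp p) (\<lambda>n. a n + b n) \<le> ((A + B) powr p) powr (1 / p)"
      using p by (auto intro!: powr_mono2 suminf_nonneg s)
    also have "\<dots> = A + B" using AB p by (simp add: powr_powr)
    finally show ?thesis using s by simp
  qed
  then show "in_space (Lp p) (\<lambda>n. a n + b n)"
    and "seqnorm (Lp p) (\<lambda>n. a n + b n) \<le> seqnorm (Lp p) a + seqnorm (Lp p) b"
    by (simp_all add: A_def B_def)
qed

lemma c0_norm_le_seqnorm:
  assumes "in_space C0 x"
  shows "cmod (x k) \<le> seqnorm C0 x"
proof -
  have "bdd_above ((\<lambda>n. cmod (x n)) ` UNIV)"
    using assms by (intro Bseq_bdd_above' convergent_imp_Bseq) (auto simp: convergent_def)
  then show ?thesis
    unfolding seqnorm.simps by (rule cSUP_upper[OF UNIV_I])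
qed

lemma c0_dominated:
  fixes y v :: "nat \<Rightarrow> complex"
  assumes v: "in_space C0 v" and C: "0 \<le> C" and le: "\<And>k. cmod (y k) \<le> C * cmod (v k)"
  shows "in_space C0 y" and "seqnorm C0 y \<le> C * seqnorm C0 v"
proof -
  have "(\<lambda>k. C * cmod (v k)) \<longlonglongrightarrow> C * 0"
    using v by (intro tendsto_intros) (simp add: tendsto_norm_zero_iff)
  moreover have "\<forall>\<^sub>F k in sequentially. norm (y k) \<le> C * cmod (v k)"
    using le by (simp add: always_eventually)
  ultimately show "in_space C0 y"
    using Lim_null_comparison by auto
  show "seqnorm C0 y \<le> C * seqnorm C0 v"
    unfolding seqnorm.simps
  proof (rule cSUP_least)
    show "cmod (y n) \<le> C * (SUP n. cmod (v n))" for n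
      using le[of n] mult_left_mono[OF c0_norm_le_seqnorm[OF v, of n] C] by simp
  qed simp
qed

lemma c0_triangle:
  fixes a b :: "nat \<Rightarrow> complex"
  assumes a: "in_space C0 a" and b: "in_space C0 b"
  shows "in_space C0 (\<lambda>n. a n + b n)"
    and "seqnorm C0 (\<lambda>n. a n + b n) \<le> seqnorm C0 a + seqnorm C0 b"
proof -
  show "in_space C0 (\<lambda>n. a n + b n)"
    using tendsto_add[of a 0 _ b 0] a b by simp
  show "seqnorm C0 (\<lambda>n. a n + b n) \<le> seqnorm C0 a + seqnorm C0 b"
    unfolding seqnorm.simps
  proof (rule cSUP_least)
    show "cmod (a n + b n) \<le> (SUP n. cmod (a n)) + (SUP n. cmod (b n))" for n
      using norm_triangle_ineq[of "a n" "b n"] c0_norm_le_seqnorm[OF a, of n]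
        c0_norm_le_seqnorm[OF b, of n] by simp
  qed simp
qed

lemma seqnorm_dominated:
  assumes S: "valid_space S" and v: "v \<in> carrier_space S" and C: "0 \<le> C"
    and le: "\<And>k. cmod (y k) \<le> C * cmod (v k)"
  shows "y \<in> carrier_space S" and "seqnorm S y \<le> C * seqnorm S v"
  using assms lp_dominated[of _ v C y] c0_dominated[of v C y]
  by (cases S; force simp: carrier_space_def)+

lemma seqnorm_triangle:
  assumes S: "valid_space S" and a: "a \<in> carrier_space S" and b: "b \<in> carrier_space S"
  shows "(\<lambda>n. a n + b n) \<in> carrier_space S"
    and "seqnorm S (\<lambda>n. a n + b n) \<le> seqnorm S a + seqnorm S b"
  using assms lp_triangle[of _ a b] c0_triangle[of a b]
  by (cases S; auto simp: carrier_space_def)+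

lemma seqnorm_nonneg:
  assumes "x \<in> carrier_space S"
  shows "0 \<le> seqnorm S x"
  using assms c0_norm_le_seqnorm[of x 0]
  by (cases S) (auto simp: carrier_space_def intro: order_trans[OF norm_ge_zero])

lemma seqnorm_zero [simp]: "seqnorm S (\<lambda>_. 0) = 0"
  by (cases S) simp_all

lemma carrier_space_diff:
  assumes S: "valid_space S" and a: "a \<in> carrier_space S" and b: "b \<in> carrier_space S"
  shows "a - b \<in> carrier_space S"
proof -
  have "(\<lambda>k. - b k) \<in> carrier_space S"
    using seqnorm_dominated(1)[OF S b, of 1] by simp
  from seqnorm_triangle(1)[OF S a this] show ?thesis
    by (simp add: fun_diff_def)
qed

lemma carrier_space_tendsto_zero:
  assumes S: "valid_space S" and x: "x \<in> carrier_space S"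
  shows "x \<longlonglongrightarrow> 0"
proof (cases S)
  case (Lp p)
  with S x have p: "1 \<le> p" and s: "summable (\<lambda>n. cmod (x n) powr p)"
    by (auto simp: carrier_space_def)
  have "(\<lambda>n. (cmod (x n) powr p) powr (1 / p)) \<longlonglongrightarrow> 0"
    using p by (intro tendsto_zero_powrI[OF summable_LIMSEQ_zero[OF s] tendsto_const]) auto
  then show ?thesis
    using p by (simp add: powr_powr tendsto_norm_zero_iff)
next
  case C0
  with x show ?thesis by (simp add: carrier_space_def)
qed

definition space_ball :: "seqspace \<Rightarrow> (nat \<Rightarrow> complex) \<Rightarrow> real \<Rightarrow> (nat \<Rightarrow> complex) set" where
  "space_ball S u r = {w \<in> carrier_space S. seqnorm S (w - u) < r}"

lemma centre_in_space_ball: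
  assumes "u \<in> carrier_space S" and "0 < r"
  shows "u \<in> space_ball S u r"
  using assms by (simp add: space_ball_def fun_diff_def)

lemma open_in_space_ball:
  assumes S: "valid_space S" and u: "u \<in> carrier_space S"
  shows "open_in_space S (space_ball S u r)"
  unfolding open_in_space_def
proof (intro conjI ballI)
  show "space_ball S u r \<subseteq> carrier_space S"
    by (auto simp: space_ball_def)
next
  fix w assume w: "w \<in> space_ball S u r"
  then have wc: "w \<in> carrier_space S" and wr: "seqnorm S (w - u) < r"
    by (auto simp: space_ball_def)
  show "\<exists>e>0. \<forall>y\<in>carrier_space S. seqnorm S (y - w) < e \<longrightarrow> y \<in> space_ball S u r"
  proof (intro exI[of _ "r - seqnorm S (w - u)"] conjI ballI impI)
    fix y assume y: "y \<in> carrier_space S" "seqnorm S (y - w) < r - seqnorm S (w - u)"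
    have "y - u = (\<lambda>n. (y - w) n + (w - u) n)"
      by (simp add: fun_diff_def)
    then have "seqnorm S (y - u) \<le> seqnorm S (y - w) + seqnorm S (w - u)"
      using seqnorm_triangle(2)[OF S carrier_space_diff[OF S y(1) wc] carrier_space_diff[OF S wc u]]
      by simp
    then show "y \<in> space_ball S u r"
      using y by (simp add: space_ball_def)
  qed (use wr in simp)
qed

lemma open_in_space_contains_ball:
  assumes "open_in_space S U" and "u \<in> U"
  obtains e where "0 < e" and "space_ball S u e \<subseteq> U"
  using assms unfolding open_in_space_def space_ball_def by blast

lemma funpow_wshift: "(wshift c ^^ n) x = (\<lambda>k. c ^ n * x (k + n))"
  by (induction n) (auto simp: wshift_def)

lemma seqnorm_mult_near_const:
  assumes S: "valid_space S" and w: "w \<in> carrier_space S" and v: "v \<in> carrier_space S"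
    and \<delta>: "0 \<le> \<delta>" and h: "\<And>k. cmod (h k - a) \<le> \<delta>"
  shows "(\<lambda>k. w k * h k) \<in> carrier_space S"
    and "seqnorm S ((\<lambda>k. w k * h k) - (\<lambda>k. a * v k))
      \<le> cmod a * seqnorm S (w - v) + \<delta> * seqnorm S w"
proof -
  have hb: "cmod (h k) \<le> cmod a + \<delta>" for k
    using norm_triangle_ineq[of a "h k - a"] h[of k] by simp
  have "cmod (w k * h k) \<le> (cmod a + \<delta>) * cmod (w k)" for k
    using mult_right_mono[OF hb[of k] norm_ge_zero[of "w k"]] by (simp add: norm_mult mult.commute)
  then show "(\<lambda>k. w k * h k) \<in> carrier_space S"
    using seqnorm_dominated(1)[OF S w] \<delta> by (meson add_nonneg_nonneg norm_ge_zero)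
  have wv: "w - v \<in> carrier_space S"
    by (rule carrier_space_diff[OF S w v])
  have d: "(\<lambda>k. a * (w - v) k) \<in> carrier_space S"
    "seqnorm S (\<lambda>k. a * (w - v) k) \<le> cmod a * seqnorm S (w - v)"
    using seqnorm_dominated[OF S wv, of "cmod a"] by (simp_all add: norm_mult)
  have "cmod (w k * (h k - a)) \<le> \<delta> * cmod (w k)" for k
    using mult_left_mono[OF h[of k] norm_ge_zero[of "w k"]] by (simp add: norm_mult mult.commute)
  note r = seqnorm_dominated[OF S w \<delta> this]
  have "(\<lambda>k. w k * h k) - (\<lambda>k. a * v k) = (\<lambda>k. a * (w - v) k + w k * (h k - a))"
    by (simp add: fun_eq_iff algebra_simps)
  then show "seqnorm S ((\<lambda>k. w k * h k) - (\<lambda>k. a * v k))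
      \<le> cmod a * seqnorm S (w - v) + \<delta> * seqnorm S w"
    using seqnorm_triangle(2)[OF S d(1) r(1)] d(2) r(2) by simp
qed

lemma space_ball_mult_near_const:
  assumes S: "valid_space S" and v: "v \<in> carrier_space S" and e: "0 < e" and a: "a \<noteq> 0"
  obtains \<eta> \<delta> where "0 < \<eta>" and "0 < \<delta>"
    and "\<And>w (h :: nat \<Rightarrow> complex). w \<in> space_ball S v \<eta> \<Longrightarrow> (\<And>k. cmod (h k - a) \<le> \<delta>) \<Longrightarrow>
      (\<lambda>k. w k * h k) \<in> space_ball S (\<lambda>k. a * v k) e"
proof
  define R where "R = seqnorm S v + 1"
  have R: "0 < R"
    using seqnorm_nonneg[OF v] by (simp add: R_def)
  show \<eta>: "0 < min 1 (e / (2 * cmod a))" and \<delta>: "0 < e / (2 * R)"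
    using e a R by simp_all
  fix w and h :: "nat \<Rightarrow> complex"
  assume w: "w \<in> space_ball S v (min 1 (e / (2 * cmod a)))"
    and h: "\<And>k. cmod (h k - a) \<le> e / (2 * R)"
  have wc: "w \<in> carrier_space S" and wv: "seqnorm S (w - v) < min 1 (e / (2 * cmod a))"
    using w by (auto simp: space_ball_def)
  have "w = (\<lambda>n. (w - v) n + v n)"
    by (simp add: fun_eq_iff)
  then have "seqnorm S w \<le> seqnorm S (w - v) + seqnorm S v"
    using seqnorm_triangle(2)[OF S carrier_space_diff[OF S wc v] v] by simp
  then have "seqnorm S w \<le> R"
    using wv by (simp add: R_def)
  then have "e / (2 * R) * seqnorm S w \<le> e / (2 * R) * R"
    using e R by (intro mult_left_mono) simp_all
  then have "e / (2 * R) * seqnorm S w \<le> e / 2"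
    using R by simp
  moreover have "cmod a * seqnorm S (w - v) < e / 2"
    using wv a by (simp add: field_simps)
  ultimately show "(\<lambda>k. w k * h k) \<in> space_ball S (\<lambda>k. a * v k) e"
    using seqnorm_mult_near_const[OF S wc v less_imp_le[OF \<delta>], where h = h and a = a, OF h]
    by (simp add: space_ball_def)
qed

lemma carrier_space_mult_convergent:
  assumes S: "valid_space S" and y: "y \<in> carrier_space S" and g: "convergent g"
  shows "(\<lambda>k. y k * g k) \<in> carrier_space S"
proof -
  obtain M where M: "0 < M" "\<And>k. cmod (g k) \<le> M"
    using convergent_imp_Bseq[OF g] by (auto simp: Bseq_def)
  have "cmod (y k * g k) \<le> M * cmod (y k)" for k
    using mult_right_mono[OF M(2)[of k] norm_ge_zero[of "y k"]] by (simp add: norm_mult mult.commute)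
  then show ?thesis
    by (rule seqnorm_dominated(1)[OF S y less_imp_le[OF M(1)]])
qed

lemma wshift_mult_convergent_near:
  assumes S: "valid_space S" and v: "v \<in> carrier_space S" and e: "0 < e"
    and g: "g \<longlonglongrightarrow> a" and a: "a \<noteq> 0"
  obtains \<eta> n0 where "0 < \<eta>"
    and "\<And>n. n0 < n \<Longrightarrow> (wshift c ^^ n) y \<in> space_ball S v \<eta> \<Longrightarrow>
      (wshift c ^^ n) (\<lambda>k. y k * g k) \<in> space_ball S (\<lambda>k. a * v k) e"
proof -
  obtain \<eta> \<delta> where \<eta>: "0 < \<eta>" and \<delta>: "0 < \<delta>"
    and near: "\<And>w h. w \<in> space_ball S v \<eta> \<Longrightarrow> (\<And>k. cmod (h k - a) \<le> \<delta>) \<Longrightarrow>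
      (\<lambda>k. w k * h k) \<in> space_ball S (\<lambda>k. a * v k) e"
    using space_ball_mult_near_const[OF S v e a] by metis
  obtain n0 where n0: "\<And>k. n0 \<le> k \<Longrightarrow> cmod (g k - a) \<le> \<delta>"
    using g \<delta> unfolding LIMSEQ_iff by (meson less_imp_le)
  have "(wshift c ^^ n) (\<lambda>k. y k * g k) \<in> space_ball S (\<lambda>k. a * v k) e"
    if "n0 < n" "(wshift c ^^ n) y \<in> space_ball S v \<eta>" for n
  proof -
    have "(wshift c ^^ n) (\<lambda>k. y k * g k) = (\<lambda>k. (wshift c ^^ n) y k * g (k + n))"
      by (simp add: funpow_wshift mult.assoc)
    also have "\<dots> \<in> space_ball S (\<lambda>k. a * v k) e"
      using that by (intro near) (auto intro: n0)
    finally show ?thesis .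
  qed
  with \<eta> show thesis
    using that by blast
qed

lemma A_hypercyclic_wshift_mult_convergent:
  assumes S: "valid_space S" and \<A>: "furstenberg_family \<A>" "finitely_invariant \<A>"
    and y: "A_hypercyclic S \<A> (wshift c) y" and g: "g \<longlonglongrightarrow> a" and a: "a \<noteq> 0"
  shows "A_hypercyclic S \<A> (wshift c) (\<lambda>k. y k * g k)"
proof -
  have yc: "y \<in> carrier_space S"
    and y_returns: "\<And>V. open_in_space S V \<Longrightarrow> V \<noteq> {} \<Longrightarrow> {n. (wshift c ^^ n) y \<in> V} \<in> \<A>"
    using y by (auto simp: A_hypercyclic_def)
  have "{n. (wshift c ^^ n) (\<lambda>k. y k * g k) \<in> U} \<in> \<A>"
    if U: "open_in_space S U" "U \<noteq> {}" for U
  proof -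
    obtain u where u: "u \<in> U"
      using U(2) by blast
    obtain e where e: "0 < e" and eU: "space_ball S u e \<subseteq> U"
      using open_in_space_contains_ball[OF U(1) u] .
    have uc: "u \<in> carrier_space S"
      using U(1) u by (auto simp: open_in_space_def)
    define v where "v = (\<lambda>k. u k / a)"
    have vc: "v \<in> carrier_space S"
      using seqnorm_dominated(1)[OF S uc, of "1 / cmod a" v] by (simp add: v_def norm_divide)
    have av: "(\<lambda>k. a * v k) = u"
      using a by (simp add: v_def)
    obtain \<eta> n0 where \<eta>: "0 < \<eta>" and near: "\<And>n. n0 < n \<Longrightarrow>
        (wshift c ^^ n) y \<in> space_ball S v \<eta> \<Longrightarrow> (wshift c ^^ n) (\<lambda>k. y k * g k) \<in> space_ball S u e"
      using wshift_mult_convergent_near[OF S vc e g a] unfolding av by metis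
    have "{n. (wshift c ^^ n) y \<in> space_ball S v \<eta>} \<in> \<A>"
      using y_returns open_in_space_ball[OF S vc] centre_in_space_ball[OF vc \<eta>] by blast
    then have "{n. (wshift c ^^ n) y \<in> space_ball S v \<eta>} - {0..n0} \<in> \<A>"
      using \<A>(2) by (simp add: finitely_invariant_def)
    moreover have "{n. (wshift c ^^ n) y \<in> space_ball S v \<eta>} - {0..n0}
        \<subseteq> {n. (wshift c ^^ n) (\<lambda>k. y k * g k) \<in> U}"
      using near eU by fastforce
    ultimately show ?thesis
      using \<A>(1) by (auto simp: furstenberg_family_def)
  qed
  moreover have "(\<lambda>k. y k * g k) \<in> carrier_space S"
    using carrier_space_mult_convergent[OF S yc] g by (auto simp: convergent_def)
  ultimately show ?thesis
    by (simp add: A_hypercyclic_def)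
qed

lemma sum_powers_factor_lowest:
  fixes \<alpha> :: "nat \<Rightarrow> 'a :: comm_semiring_1"
  assumes "m \<le> N"
  shows "(\<Sum>\<nu>=m..N. \<alpha> \<nu> * t ^ \<nu>) = t ^ m * (\<alpha> m + (\<Sum>\<nu>=Suc m..N. \<alpha> \<nu> * t ^ (\<nu> - m)))"
proof -
  have "t ^ \<nu> = t ^ m * t ^ (\<nu> - m)" if "\<nu> \<in> {Suc m..N}" for \<nu>
    using that by (simp flip: power_add)
  then have "(\<Sum>\<nu>=Suc m..N. \<alpha> \<nu> * t ^ \<nu>) = (\<Sum>\<nu>=Suc m..N. t ^ m * (\<alpha> \<nu> * t ^ (\<nu> - m)))"
    by (intro sum.cong refl) (simp add: ac_simps)
  then show ?thesis
    using assms by (simp add: sum.atLeast_Suc_atMost sum_distrib_left algebra_simps)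
qed

lemma tendsto_sum_higher_powers:
  fixes \<alpha> :: "nat \<Rightarrow> 'a :: real_normed_field"
  assumes "x \<longlonglongrightarrow> 0"
  shows "(\<lambda>k. \<alpha> m + (\<Sum>\<nu>=Suc m..N. \<alpha> \<nu> * x k ^ (\<nu> - m))) \<longlonglongrightarrow> \<alpha> m"
proof -
  have "(\<lambda>k. \<alpha> \<nu> * x k ^ (\<nu> - m)) \<longlonglongrightarrow> \<alpha> \<nu> * 0 ^ (\<nu> - m)" for \<nu>
    using assms by (intro tendsto_intros)
  moreover have "\<alpha> \<nu> * 0 ^ (\<nu> - m) = 0" if "\<nu> \<in> {Suc m..N}" for \<nu>
    using that by simp
  ultimately
  have "(\<lambda>k. \<Sum>\<nu>=Suc m..N. \<alpha> \<nu> * x k ^ (\<nu> - m)) \<longlonglongrightarrow> 0"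
    by (intro tendsto_null_sum) metis
  then show ?thesis
    using tendsto_add[OF tendsto_const] by fastforce
qed

theorem proposition2p1:
  fixes S :: seqspace and \<A> :: "nat set set" and x0 :: "nat \<Rightarrow> complex"
    and m N :: nat and c :: complex and \<alpha> :: "nat \<Rightarrow> complex"
  assumes "valid_space S"
    and "furstenberg_family \<A>" and "finitely_invariant \<A>"
    and "x0 \<in> carrier_space S"
    and "m \<ge> 1"
    and "cmod c > 1"
    and "A_hypercyclic S \<A> (wshift c) (\<lambda>k. x0 k ^ m)"
    and "N \<ge> m" and "\<alpha> m \<noteq> 0"
  shows "A_hypercyclic S \<A> (wshift c) (\<lambda>k. \<Sum>\<nu>=m..N. \<alpha> \<nu> * x0 k ^ \<nu>)"
proof -
  define g where "g k = \<alpha> m + (\<Sum>\<nu>=Suc m..N. \<alpha> \<nu> * x0 k ^ (\<nu> - m))" for k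
  have "x0 \<longlonglongrightarrow> 0"
    using carrier_space_tendsto_zero assms(1,4) .
  then have "g \<longlonglongrightarrow> \<alpha> m"
    unfolding g_def by (rule tendsto_sum_higher_powers)
  then have "A_hypercyclic S \<A> (wshift c) (\<lambda>k. x0 k ^ m * g k)"
    using A_hypercyclic_wshift_mult_convergent assms(1-3,7,9) by blast
  moreover have "(\<lambda>k. x0 k ^ m * g k) = (\<lambda>k. \<Sum>\<nu>=m..N. \<alpha> \<nu> * x0 k ^ \<nu>)"
    by (simp only: g_def sum_powers_factor_lowest[OF assms(8)])
  ultimately show ?thesis
    by simp
qed

end
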